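(* Let $\alpha>0$ and let $(X_t;t\geq0)$ be an $\alpha$-IDT process which is stochastically continuous and has independent increments. Then $X$ is a time-changed Lévy process with the deterministic chronometer $h(t)=t^{\alpha}$, i.e. there is a Lévy process $(L_t;t\geq0)$ such that $(X_t;t\geq0)\stackrel{(law)}{=}(L_{t^\alpha};t\geq0)$ as processes.
   Context: For $\alpha>0$, a stochastic process $X=(X_t;t\geq0)$ (real or $\mathbb{R}^d$-valued) is called an $\alpha$-IDT process if for every integer $n\geq1$, $(X_{n^{1/\alpha}t};t\geq0)\stackrel{(law)}{=}(X^{(1)}_t+\cdots+X^{(n)}_t;t\geq0)$, where $X^{(1)},\dots,X^{(n)}$ are independent copies of $X$; equality in law means equality of all finite-dimensional distributions. *)

theory Defs
  imports "HOL-Probability.Probability"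
begin

definition is_process :: "'w measure \<Rightarrow> (real \<Rightarrow> 'w \<Rightarrow> 'a::euclidean_space) \<Rightarrow> bool" where
  "is_process M X \<longleftrightarrow> prob_space M \<and> (\<forall>t\<ge>0. X t \<in> borel_measurable M)"

definition fdd :: "'w measure \<Rightarrow> (real \<Rightarrow> 'w \<Rightarrow> 'a::euclidean_space) \<Rightarrow> real list \<Rightarrow> (nat \<Rightarrow> 'a) measure" where
  "fdd M X ts = distr M (PiM {..<length ts} (\<lambda>_. borel)) (\<lambda>\<omega>. \<lambda>i\<in>{..<length ts}. X (ts ! i) \<omega>)"

definition eq_law :: "'w measure \<Rightarrow> (real \<Rightarrow> 'w \<Rightarrow> 'a::euclidean_space) \<Rightarrow>
    'v measure \<Rightarrow> (real \<Rightarrow> 'v \<Rightarrow> 'a) \<Rightarrow> bool" where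
  "eq_law M X N Y \<longleftrightarrow> (\<forall>ts. (\<forall>t\<in>set ts. 0 \<le> t) \<longrightarrow> fdd M X ts = fdd N Y ts)"

text \<open>The independent copies are realised canonically on the
  product space PiM {..<n} (\<lambda>_. M): the i-th copy is X t (\<omega> i).\<close>
definition alpha_IDT :: "real \<Rightarrow> 'w measure \<Rightarrow> (real \<Rightarrow> 'w \<Rightarrow> 'a::euclidean_space) \<Rightarrow> bool" where
  "alpha_IDT \<alpha> M X \<longleftrightarrow> is_process M X \<and>
     (\<forall>n::nat. n \<ge> 1 \<longrightarrow>
        eq_law M (\<lambda>t \<omega>. X (real n powr (1 / \<alpha>) * t) \<omega>)
               (PiM {..<n} (\<lambda>_. M)) (\<lambda>t \<omega>. \<Sum>i<n. X t (\<omega> i)))"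

definition stoch_continuous :: "'w measure \<Rightarrow> (real \<Rightarrow> 'w \<Rightarrow> 'a::euclidean_space) \<Rightarrow> bool" where
  "stoch_continuous M X \<longleftrightarrow>
     (\<forall>t\<ge>0. \<forall>\<epsilon>>0.
        ((\<lambda>s. measure M {\<omega>\<in>space M. dist (X s \<omega>) (X t \<omega>) > \<epsilon>}) \<longlongrightarrow> 0) (at t within {0..}))"

definition indep_increments :: "'w measure \<Rightarrow> (real \<Rightarrow> 'w \<Rightarrow> 'a::euclidean_space) \<Rightarrow> bool" where
  "indep_increments M X \<longleftrightarrow>
     (\<forall>ts. sorted_wrt (<) ts \<longrightarrow> (\<forall>t\<in>set ts. 0 \<le> t) \<longrightarrow>
        prob_space.indep_vars M (\<lambda>_. borel)
          (\<lambda>i \<omega>. X (ts ! Suc i) \<omega> - X (ts ! i) \<omega>) {..<length ts - 1})"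

definition stationary_increments :: "'w measure \<Rightarrow> (real \<Rightarrow> 'w \<Rightarrow> 'a::euclidean_space) \<Rightarrow> bool" where
  "stationary_increments M X \<longleftrightarrow>
     (\<forall>s\<ge>0. \<forall>t\<ge>0. distr M borel (\<lambda>\<omega>. X (t + s) \<omega> - X s \<omega>) = distr M borel (X t))"

definition levy_process :: "'w measure \<Rightarrow> (real \<Rightarrow> 'w \<Rightarrow> 'a::euclidean_space) \<Rightarrow> bool" where
  "levy_process M L \<longleftrightarrow> is_process M L \<and> (AE \<omega> in M. L 0 \<omega> = 0) \<and>
     indep_increments M L \<and> stationary_increments M L \<and> stoch_continuous M L"

end

theory Submission
  imports Defs
begin

text \<open>
  Put Y t = X (t powr (1/\<alpha>)) and let \<phi> t be the characteristic function of Y t at a fixed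
  argument. The IDT property at a single time gives \<phi> (k * t) = \<phi> t ^ k for natural k; at
  t = 0 and k = 2 this makes the characteristic function of Y 0 idempotent, hence identically 1
  by continuity, so Y 0 = 0 almost surely. Stochastic continuity makes \<phi> continuous, which
  rules out zeros and, by dyadic approximation, turns \<phi> (k * t) = \<phi> t ^ k into
  \<phi> (s + t) = \<phi> s * \<phi> t. Independence of Y s and Y (s + t) - Y s then shows that the
  increment has characteristic function \<phi> t, so Y has stationary increments and is a Levy
  process, while X t = Y (t powr \<alpha>) pointwise. That characteristic functions determine laws on
  Euclidean space is proved via Stone-Weierstrass for trigonometric polynomials.
\<close>

section \<open>Trigonometric polynomials\<close>

inductive_set trig_polynomial :: "('a::euclidean_space \<Rightarrow> real) set" where
  cos: "(\<lambda>x. a * cos (u \<bullet> x + c)) \<in> trig_polynomial"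
| add: "f \<in> trig_polynomial \<Longrightarrow> g \<in> trig_polynomial \<Longrightarrow> (\<lambda>x. f x + g x) \<in> trig_polynomial"

lemma trig_polynomial_const: "(\<lambda>x. c) \<in> trig_polynomial"
  using trig_polynomial.cos[of c 0 0] by simp

lemma trig_polynomial_cmult: "f \<in> trig_polynomial \<Longrightarrow> (\<lambda>x. k * f x) \<in> trig_polynomial"
proof (induction rule: trig_polynomial.induct)
  case (cos a u c)
  then show ?case using trig_polynomial.cos[of "k * a" u c] by (simp add: mult.assoc)
next
  case (add f g)
  then show ?case using trig_polynomial.add[of "\<lambda>x. k * f x" "\<lambda>x. k * g x"] by (simp add: distrib_left)
qed

lemma cos_mult_cos_inner:
  "cos (u \<bullet> x + c) * cos (v \<bullet> x + d) =
     (cos ((u - v) \<bullet> x + (c - d)) + cos ((u + v) \<bullet> x + (c + d))) / 2"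
proof -
  have "(u \<bullet> x + c) - (v \<bullet> x + d) = (u - v) \<bullet> x + (c - d)"
    and "(u \<bullet> x + c) + (v \<bullet> x + d) = (u + v) \<bullet> x + (c + d)"
    by (simp_all add: inner_add_left inner_diff_left)
  with cos_times_cos[of "u \<bullet> x + c" "v \<bullet> x + d"] show ?thesis by (simp only:)
qed

lemma trig_polynomial_mult_cos:
  "g \<in> trig_polynomial \<Longrightarrow> (\<lambda>x. a * cos (u \<bullet> x + c) * g x) \<in> trig_polynomial"
proof (induction rule: trig_polynomial.induct)
  case (cos b v d)
  have "a * cos (u \<bullet> x + c) * (b * cos (v \<bullet> x + d)) =
        (a*b/2) * cos ((u-v) \<bullet> x + (c-d)) + (a*b/2) * cos ((u+v) \<bullet> x + (c+d))" for x
  proof -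
    have "a * cos (u \<bullet> x + c) * (b * cos (v \<bullet> x + d)) = a * b * (cos (u \<bullet> x + c) * cos (v \<bullet> x + d))"
      by (simp only: ac_simps)
    then show ?thesis by (simp only: cos_mult_cos_inner) (simp add: field_simps)
  qed
  then show ?case by (simp only: trig_polynomial.add trig_polynomial.cos)
next
  case (add f g)
  then show ?case
    using trig_polynomial.add[of "\<lambda>x. a * cos (u \<bullet> x + c) * f x" "\<lambda>x. a * cos (u \<bullet> x + c) * g x"]
    by (simp add: distrib_left)
qed

lemma trig_polynomial_mult:
  "f \<in> trig_polynomial \<Longrightarrow> g \<in> trig_polynomial \<Longrightarrow> (\<lambda>x. f x * g x) \<in> trig_polynomial"
proof (induction rule: trig_polynomial.induct)
  case (cos a u c)
  then show ?case by (rule trig_polynomial_mult_cos)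
next
  case (add f1 f2)
  then show ?case using trig_polynomial.add[of "\<lambda>x. f1 x * g x" "\<lambda>x. f2 x * g x"]
    by (simp add: distrib_right)
qed

lemma continuous_on_trig_polynomial: "f \<in> trig_polynomial \<Longrightarrow> continuous_on S f"
  by (induction rule: trig_polynomial.induct) (auto intro!: continuous_intros)

lemma borel_measurable_trig_polynomial: "f \<in> trig_polynomial \<Longrightarrow> f \<in> borel_measurable borel"
  by (induction rule: trig_polynomial.induct) auto

lemma trig_polynomial_bounded: "f \<in> trig_polynomial \<Longrightarrow> \<exists>C. \<forall>x. \<bar>f x\<bar> \<le> C"
proof (induction rule: trig_polynomial.induct)
  case (cos a u c)
  have "\<bar>a * cos (u \<bullet> x + c)\<bar> \<le> \<bar>a\<bar>" for x
    by (simp add: abs_mult mult_left_le)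
  then show ?case by blast
next
  case (add f g)
  then obtain C D where "\<forall>x. \<bar>f x\<bar> \<le> C" "\<forall>x. \<bar>g x\<bar> \<le> D" by blast
  then have "\<forall>x. \<bar>f x + g x\<bar> \<le> C + D" by (metis abs_triangle_ineq add_mono order_trans)
  then show ?case by blast
qed

lemma trig_polynomial_compose_polynomial:
  "real_polynomial_function p \<Longrightarrow> g \<in> trig_polynomial \<Longrightarrow> (\<lambda>x. p (g x)) \<in> trig_polynomial"
proof (induction p rule: real_polynomial_function.induct)
  case (linear f)
  then obtain k where "f = (\<lambda>y. k * y)"
    by (metis bounded_linear.linear real_linearD mult.commute)
  then show ?case using trig_polynomial_cmult[OF linear(2)] by simp
qed (auto intro: trig_polynomial_const trig_polynomial.add trig_polynomial_mult)

lemma cos_one_neq_one: "cos (1::real) \<noteq> 1"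
proof
  assume "cos (1::real) = 1"
  then obtain k :: int where "1 = 2 * pi * k"
    using cos_one_2pi_int[of 1] by (auto simp: mult.commute mult.left_commute)
  moreover have "k \<noteq> 0" using calculation by auto
  then have "2 * pi \<le> \<bar>2 * pi * k\<bar>" using pi_gt_zero by (simp add: abs_mult)
  ultimately show False using pi_gt3 by simp
qed

lemma trig_polynomial_separating:
  fixes x y :: "'a::euclidean_space"
  assumes "x \<noteq> y"
  shows "\<exists>f\<in>trig_polynomial. f x \<noteq> f y"
proof -
  define u where "u = (x - y) /\<^sub>R (norm (x - y))^2"
  have "u \<bullet> (x - y) = 1"
    using assms unfolding u_def by (simp add: power2_norm_eq_inner)
  then have "cos (u \<bullet> x - u \<bullet> y) \<noteq> cos (u \<bullet> y - u \<bullet> y)"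
    using cos_one_neq_one by (simp add: inner_diff_right)
  then have "cos (u \<bullet> x + - (u \<bullet> y)) \<noteq> cos (u \<bullet> y + - (u \<bullet> y))"
    by simp
  then show ?thesis
    using trig_polynomial.cos[of 1 u "- (u \<bullet> y)"] by (metis mult_1)
qed

section \<open>Uniqueness of characteristic functions on Euclidean space\<close>

lemma measurable_sets_borel:
  "sets M = sets borel \<Longrightarrow> f \<in> borel_measurable borel \<Longrightarrow> f \<in> borel_measurable M"
  using measurable_cong_sets[of M borel borel borel] by simp

lemma integrable_trig_polynomial:
  assumes "prob_space M" "sets M = sets borel" "f \<in> trig_polynomial"
  shows "integrable M f"
proof -
  interpret prob_space M by fact
  obtain C where "\<And>x. \<bar>f x\<bar> \<le> C" using trig_polynomial_bounded[OF assms(3)] by blast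
  moreover have "f \<in> borel_measurable M"
    using borel_measurable_trig_polynomial[OF assms(3)] measurable_sets_borel[OF assms(2)] by blast
  ultimately show ?thesis by (intro integrable_const_bound[of _ C]) auto
qed

lemma integral_cos_inner_eq_Re_char:
  fixes \<mu> :: "'a::euclidean_space measure"
  assumes "prob_space \<mu>" "sets \<mu> = sets borel"
  shows "(\<integral>x. cos (u \<bullet> x + c) \<partial>\<mu>) = Re (iexp c * (CLINT x|\<mu>. iexp (u \<bullet> x)))"
proof -
  interpret prob_space \<mu> by fact
  have cos_eq: "cos (u \<bullet> x + c) = Re (iexp c * iexp (u \<bullet> x))" for x
    by (simp add: Re_exp exp_add[symmetric] algebra_simps)
  have "integrable \<mu> (\<lambda>x. iexp c * iexp (u \<bullet> x))"
    by (intro integrable_const_bound[of _ 1] measurable_sets_borel[OF assms(2)]) (auto simp: norm_mult)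
  then have "(\<integral>x. Re (iexp c * iexp (u \<bullet> x)) \<partial>\<mu>) = Re (CLINT x|\<mu>. iexp c * iexp (u \<bullet> x))"
    by (rule integral_Re)
  then show ?thesis by (simp only: cos_eq integral_mult_right_zero)
qed

lemma prob_compl_cball_less:
  fixes M :: "'a::euclidean_space measure"
  assumes "prob_space M" "sets M = sets borel" "e > 0"
  shows "\<exists>R. measure M (- cball 0 R) < e"
proof -
  interpret prob_space M by fact
  have space: "space M = UNIV" using sets_eq_imp_space_eq[OF assms(2)] by (simp only: space_borel)
  have "(\<lambda>n. measure M (cball (0::'a) (real n))) \<longlonglongrightarrow> measure M (\<Union>n. cball 0 (real n))"
  proof (rule finite_Lim_measure_incseq)
    show "range (\<lambda>n. cball (0::'a) (real n)) \<subseteq> sets M" unfolding assms(2) by auto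
    show "incseq (\<lambda>n. cball (0::'a) (real n))"
      unfolding incseq_def by (intro allI impI subset_cball) simp
  qed
  moreover have "(\<Union>n. cball (0::'a) (real n)) = space M"
    unfolding space by (auto intro: real_arch_simple)
  ultimately have "(\<lambda>n. measure M (cball (0::'a) (real n))) \<longlonglongrightarrow> measure M (space M)"
    by (simp only:)
  then have "(\<lambda>n. measure M (cball (0::'a) (real n))) \<longlonglongrightarrow> 1"
    by (simp only: prob_space)
  then have "eventually (\<lambda>n. measure M (cball (0::'a) (real n)) > 1 - e) sequentially"
    by (rule order_tendstoD) (use assms(3) in simp)
  then obtain n where "measure M (cball (0::'a) (real n)) > 1 - e"
    by (auto simp: eventually_sequentially)
  moreover have "measure M (- cball (0::'a) (real n)) = 1 - measure M (cball 0 (real n))"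
    using prob_compl[of "cball 0 (real n)"] unfolding space Compl_eq_Diff_UNIV assms(2) by simp
  ultimately have "measure M (- cball (0::'a) (real n)) < e" by linarith
  then show ?thesis by blast
qed

lemma norm_integral_diff_le_indicator:
  fixes f h :: "'w \<Rightarrow> 'b::{banach, second_countable_topology}"
  assumes "prob_space M" "integrable M f" "integrable M h" "A \<in> sets M"
    and "\<And>x. x \<in> space M \<Longrightarrow> norm (f x - h x) \<le> a + b * indicator A x"
  shows "norm ((\<integral>x. f x \<partial>M) - (\<integral>x. h x \<partial>M)) \<le> a + b * measure M A"
proof -
  interpret prob_space M by fact
  have A: "integrable M (indicat_real A)"
    using assms(4) by (intro integrable_real_indicator) (auto simp: emeasure_finite less_top[symmetric])
  have "norm ((\<integral>x. f x \<partial>M) - (\<integral>x. h x \<partial>M)) = norm (\<integral>x. f x - h x \<partial>M)"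
    using assms(2,3) by simp
  also have "\<dots> \<le> (\<integral>x. norm (f x - h x) \<partial>M)" by (rule integral_norm_bound)
  also have "\<dots> \<le> (\<integral>x. a + b * indicator A x \<partial>M)"
    using assms(2,3,5) A by (intro integral_mono) auto
  also have "\<dots> = a + b * measure M A"
    using A prob_space Int_absorb2[OF sets.sets_into_space[OF assms(4)]] by simp
  finally show ?thesis .
qed

lemma trig_polynomial_approx_bounded_continuous:
  fixes f :: "'a::euclidean_space \<Rightarrow> real"
  assumes "compact K" "continuous_on UNIV f" "\<And>x. \<bar>f x\<bar> \<le> B" "e > 0"
  obtains h where "h \<in> trig_polynomial" "\<And>x. x \<in> K \<Longrightarrow> \<bar>f x - h x\<bar> < 2 * e"
    "\<And>x. \<bar>h x\<bar> < B + e"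
proof -
  interpret function_ring_on "trig_polynomial :: ('a \<Rightarrow> real) set" K
    by unfold_locales (auto intro: assms(1) continuous_on_trig_polynomial trig_polynomial.add
        trig_polynomial_mult trig_polynomial_const trig_polynomial_separating)
  obtain g where g: "g \<in> trig_polynomial" "\<And>x. x \<in> K \<Longrightarrow> \<bar>f x - g x\<bar> < e"
    using Stone_Weierstrass_basic[of f e] continuous_on_subset[OF assms(2)] assms(4) by blast
  obtain C where C: "\<And>x. \<bar>g x\<bar> \<le> C" using trig_polynomial_bounded[OF g(1)] by blast
  \<comment> \<open>g may be large off K, so compose it with a polynomial close to the clamp to [-B, B].\<close>
  define clamp where "clamp y = max (-B) (min B y)" for y :: real
  have "continuous_on {-C..C} clamp" unfolding clamp_def by (intro continuous_intros)
  then obtain p where p: "real_polynomial_function p" "\<And>y. y \<in> {-C..C} \<Longrightarrow> \<bar>clamp y - p y\<bar> < e"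
    using Stone_Weierstrass_real_polynomial_function[of "{-C..C}" clamp e] assms(4) by blast
  have clamp_g: "\<bar>clamp (g x) - p (g x)\<bar> < e" for x
    using p(2)[of "g x"] C[of x] by (simp add: abs_le_iff)
  have clamp_bound: "\<bar>clamp y\<bar> \<le> B" for y
    using assms(3)[of 0] unfolding clamp_def by (auto simp: max_def min_def)
  have clamp_near: "\<bar>f x - clamp y\<bar> \<le> \<bar>f x - y\<bar>" for x y
    using assms(3)[of x] unfolding clamp_def abs_le_iff by (auto simp: max_def min_def)
  show ?thesis
  proof
    show "(\<lambda>x. p (g x)) \<in> trig_polynomial" by (rule trig_polynomial_compose_polynomial[OF p(1) g(1)])
    show "\<bar>f x - p (g x)\<bar> < 2 * e" if "x \<in> K" for x
      using g(2)[OF that] clamp_g[of x] clamp_near[of x "g x"] by linarith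
    show "\<bar>p (g x)\<bar> < B + e" for x
      using clamp_g[of x] clamp_bound[of "g x"] by linarith
  qed
qed
lemma integrable_bounded_continuous:
  fixes f :: "'a::euclidean_space \<Rightarrow> real"
  assumes "prob_space M" "sets M = sets borel" "continuous_on UNIV f" "\<And>x. \<bar>f x\<bar> \<le> B"
  shows "integrable M f"
proof -
  interpret prob_space M by fact
  show ?thesis
    using assms(4) borel_measurable_continuous_onI[OF assms(3)]
    by (intro integrable_const_bound[of _ B] measurable_sets_borel[OF assms(2)]) auto
qed

lemma integral_bounded_continuous_eq_if_char_eq:
  fixes \<mu> \<nu> :: "'a::euclidean_space measure" and f :: "'a \<Rightarrow> real"
  assumes \<mu>: "prob_space \<mu>" "sets \<mu> = sets borel" and \<nu>: "prob_space \<nu>" "sets \<nu> = sets borel"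
    and char_eq: "\<And>u. (CLINT x|\<mu>. iexp (u \<bullet> x)) = (CLINT x|\<nu>. iexp (u \<bullet> x))"
    and f: "continuous_on UNIV f" "\<And>x. \<bar>f x\<bar> \<le> B"
  shows "(\<integral>x. f x \<partial>\<mu>) = (\<integral>x. f x \<partial>\<nu>)"
proof -
  interpret m: prob_space \<mu> by (rule \<mu>(1))
  interpret n: prob_space \<nu> by (rule \<nu>(1))
  have B: "0 \<le> B" using f(2)[of 0] by linarith
  have trig_eq: "(\<integral>x. h x \<partial>\<mu>) = (\<integral>x. h x \<partial>\<nu>)" if "h \<in> trig_polynomial" for h
    using that
  proof (induction rule: trig_polynomial.induct)
    case (cos a u c)
    then show ?case
      using char_eq[of u] integral_cos_inner_eq_Re_char[OF \<mu>] integral_cos_inner_eq_Re_char[OF \<nu>] by simp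
  next
    case (add g h)
    then show ?case
      using integrable_trig_polynomial[OF \<mu>] integrable_trig_polynomial[OF \<nu>] by simp
  qed
  have close: "\<bar>(\<integral>x. f x \<partial>\<mu>) - (\<integral>x. f x \<partial>\<nu>)\<bar> \<le> (4 * B + 6) * e" if e: "0 < e" "e \<le> 1" for e
  proof -
    obtain R1 R2 where R: "measure \<mu> (- cball 0 R1) < e" "measure \<nu> (- cball 0 R2) < e"
      using prob_compl_cball_less[OF \<mu> e(1)] prob_compl_cball_less[OF \<nu> e(1)] by blast
    define K where "K = cball (0::'a) (max R1 R2)"
    have "measure \<mu> (- K) \<le> measure \<mu> (- cball 0 R1)" "measure \<nu> (- K) \<le> measure \<nu> (- cball 0 R2)"
      by (rule m.finite_measure_mono n.finite_measure_mono, use \<mu>(2) \<nu>(2) in \<open>auto simp: K_def\<close>)+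
    then have tail: "measure \<mu> (- K) < e" "measure \<nu> (- K) < e" using R by linarith+
    have "compact K" unfolding K_def by simp
    obtain h where h: "h \<in> trig_polynomial" "\<And>x. x \<in> K \<Longrightarrow> \<bar>f x - h x\<bar> < 2 * e" "\<And>x. \<bar>h x\<bar> < B + e"
      using trig_polynomial_approx_bounded_continuous[OF \<open>compact K\<close> f e(1)] by blast
    have pointwise: "\<bar>f x - h x\<bar> \<le> 2 * e + (2 * B + e) * indicator (- K) x" for x
    proof (cases "x \<in> K")
      case True
      then show ?thesis using h(2)[of x] by simp
    next
      case False
      have "\<bar>f x - h x\<bar> \<le> \<bar>f x\<bar> + \<bar>h x\<bar>" by (rule abs_triangle_ineq4)
      then show ?thesis using False h(3)[of x] f(2)[of x] e(1) by simp
    qed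
    have approx: "\<bar>(\<integral>x. f x \<partial>M) - (\<integral>x. h x \<partial>M)\<bar> \<le> 2 * e + (2 * B + e) * e"
      if M: "prob_space M" "sets M = sets borel" and "measure M (- K) < e" for M
    proof -
      have "\<bar>(\<integral>x. f x \<partial>M) - (\<integral>x. h x \<partial>M)\<bar> \<le> 2 * e + (2 * B + e) * measure M (- K)"
      proof (rule norm_integral_diff_le_indicator[where 'b=real, unfolded real_norm_def, OF M(1)])
        show "integrable M f" by (rule integrable_bounded_continuous[OF M f])
        show "integrable M h" by (rule integrable_trig_polynomial[OF M h(1)])
        show "- K \<in> sets M" using M(2) unfolding K_def by simp
      qed (rule pointwise)
      also have "\<dots> \<le> 2 * e + (2 * B + e) * e"
        using that(3) B e by (intro add_left_mono mult_left_mono) auto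
      finally show ?thesis .
    qed
    have "\<bar>(\<integral>x. f x \<partial>\<mu>) - (\<integral>x. f x \<partial>\<nu>)\<bar> \<le> 2 * (2 * e + (2 * B + e) * e)"
      using approx[OF \<mu> tail(1), unfolded abs_le_iff] approx[OF \<nu> tail(2), unfolded abs_le_iff] trig_eq[OF h(1)]
      unfolding abs_le_iff by auto
    also have "\<dots> \<le> (4 * B + 6) * e"
      using mult_left_le[of e e] e by (simp add: algebra_simps)
    finally show ?thesis .
  qed
  have "\<bar>(\<integral>x. f x \<partial>\<mu>) - (\<integral>x. f x \<partial>\<nu>)\<bar> \<le> 0"
  proof (rule field_le_epsilon)
    fix \<epsilon> :: real assume "0 < \<epsilon>"
    define e where "e = min 1 (\<epsilon> / (4 * B + 6))"
    have den: "0 < 4 * B + 6" using B by simp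
    have "(4 * B + 6) * e \<le> (4 * B + 6) * (\<epsilon> / (4 * B + 6))"
      using den unfolding e_def by (intro mult_left_mono) auto
    moreover have "0 < e" "e \<le> 1" using \<open>0 < \<epsilon>\<close> den unfolding e_def by auto
    ultimately show "\<bar>(\<integral>x. f x \<partial>\<mu>) - (\<integral>x. f x \<partial>\<nu>)\<bar> \<le> 0 + \<epsilon>"
      using close[of e] den by simp
  qed
  then show ?thesis by simp
qed
lemma open_indicator_continuous_approx:
  fixes U :: "'a::euclidean_space set"
  assumes "open U"
  obtains s :: "nat \<Rightarrow> 'a \<Rightarrow> real"
  where "\<And>n. continuous_on UNIV (s n)" "\<And>n x. \<bar>s n x\<bar> \<le> 1" "\<And>x. (\<lambda>n. s n x) \<longlonglongrightarrow> indicator U x"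
proof (cases "U = UNIV")
  case True
  then show ?thesis by (intro that[of "\<lambda>n x. 1"]) auto
next
  case False
  define F where "F = - U"
  have F: "closed F" "F \<noteq> {}" using assms False unfolding F_def by auto
  define s where "s n x = min 1 (real n * infdist x F)" for n x
  have conv: "(\<lambda>n. s n x) \<longlonglongrightarrow> indicator U x" for x
  proof (cases "x \<in> U")
    case True
    then have d: "infdist x F > 0"
      using in_closed_iff_infdist_zero[OF F, of x] infdist_nonneg[of x F] unfolding F_def by auto
    obtain N where N: "1 / infdist x F < real N" using reals_Archimedean2 by blast
    have "s n x = 1" if "N \<le> n" for n
    proof -
      have "1 / infdist x F < real n" using N that by linarith
      then show ?thesis using d unfolding s_def by (simp add: field_simps)
    qed
    then have "(\<lambda>n. s n x) \<longlonglongrightarrow> 1" by (intro tendsto_eventually eventually_sequentiallyI)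
    then show ?thesis using True by simp
  next
    case False
    then have "infdist x F = 0" using in_closed_iff_infdist_zero[OF F] unfolding F_def by simp
    then show ?thesis using False unfolding s_def by simp
  qed
  show ?thesis
  proof (rule that[of s])
    show "continuous_on UNIV (s n)" for n unfolding s_def by (intro continuous_intros)
    show "\<bar>s n x\<bar> \<le> 1" for n x unfolding s_def using infdist_nonneg[of x F] by auto
  qed (rule conv)
qed

lemma measure_open_eq_if_char_eq:
  fixes \<mu> \<nu> :: "'a::euclidean_space measure"
  assumes \<mu>: "prob_space \<mu>" "sets \<mu> = sets borel" and \<nu>: "prob_space \<nu>" "sets \<nu> = sets borel"
    and char_eq: "\<And>u. (CLINT x|\<mu>. iexp (u \<bullet> x)) = (CLINT x|\<nu>. iexp (u \<bullet> x))"
    and "open U"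
  shows "measure \<mu> U = measure \<nu> U"
proof -
  obtain s :: "nat \<Rightarrow> 'a \<Rightarrow> real" where s: "\<And>n. continuous_on UNIV (s n)" "\<And>n x. \<bar>s n x\<bar> \<le> 1"
    "\<And>x. (\<lambda>n. s n x) \<longlonglongrightarrow> indicator U x"
    using open_indicator_continuous_approx[OF \<open>open U\<close>] by blast
  have lim: "(\<lambda>n. \<integral>x. s n x \<partial>M) \<longlonglongrightarrow> measure M U"
    if M: "prob_space M" "sets M = sets borel" for M
  proof -
    interpret prob_space M by (rule M(1))
    have "U \<in> sets M" unfolding M(2) using \<open>open U\<close> by simp
    have "(\<lambda>n. \<integral>x. s n x \<partial>M) \<longlonglongrightarrow> (\<integral>x. indicator U x \<partial>M)"
    proof (rule integral_dominated_convergence[where w="\<lambda>_. 1"])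
      show "indicat_real U \<in> borel_measurable M" using \<open>U \<in> sets M\<close> by simp
      show "s n \<in> borel_measurable M" for n
        by (rule measurable_sets_borel[OF M(2) borel_measurable_continuous_onI[OF s(1)]])
    qed (use s in auto)
    then show ?thesis using \<open>U \<in> sets M\<close> by simp
  qed
  have "(\<integral>x. s n x \<partial>\<mu>) = (\<integral>x. s n x \<partial>\<nu>)" for n
    by (rule integral_bounded_continuous_eq_if_char_eq[OF \<mu> \<nu> char_eq s(1,2)])
  with lim[OF \<mu>] have "(\<lambda>n. \<integral>x. s n x \<partial>\<nu>) \<longlonglongrightarrow> measure \<mu> U" by simp
  from LIMSEQ_unique[OF this lim[OF \<nu>]] show ?thesis .
qed

theorem Levy_uniqueness_euclidean:
  fixes \<mu> \<nu> :: "'a::euclidean_space measure"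
  assumes \<mu>: "prob_space \<mu>" "sets \<mu> = sets borel" and \<nu>: "prob_space \<nu>" "sets \<nu> = sets borel"
    and char_eq: "\<And>u. (CLINT x|\<mu>. iexp (u \<bullet> x)) = (CLINT x|\<nu>. iexp (u \<bullet> x))"
  shows "\<mu> = \<nu>"
proof (rule measure_eqI_generator_eq[where E="{S. open S}" and \<Omega>=UNIV and A="\<lambda>_. UNIV"])
  interpret m: prob_space \<mu> by (rule \<mu>(1))
  interpret n: prob_space \<nu> by (rule \<nu>(1))
  show "Int_stable {S::'a set. open S}" by (auto simp: Int_stable_def)
  show "sets \<mu> = sigma_sets UNIV {S. open S}" "sets \<nu> = sigma_sets UNIV {S. open S}"
    using \<mu>(2) \<nu>(2) sets_borel by simp_all
  show "emeasure \<mu> (UNIV::'a set) \<noteq> \<infinity>" by simp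
  show "emeasure \<mu> X = emeasure \<nu> X" if "X \<in> {S. open S}" for X
    using that measure_open_eq_if_char_eq[OF \<mu> \<nu> char_eq, of X] \<mu>(2) \<nu>(2)
    by (simp add: m.emeasure_eq_measure n.emeasure_eq_measure)
qed auto

section \<open>Characteristic functions of random variables\<close>

definition char_fun :: "'w measure \<Rightarrow> ('w \<Rightarrow> 'a::euclidean_space) \<Rightarrow> 'a \<Rightarrow> complex" where
  "char_fun M Z u = (CLINT \<omega>|M. iexp (u \<bullet> Z \<omega>))"

lemma borel_measurable_iexp_inner [measurable]:
  "(\<lambda>x::'a::euclidean_space. iexp (u \<bullet> x)) \<in> borel_measurable borel"
  by (intro borel_measurable_continuous_onI continuous_intros)

lemma integrable_iexp_inner:
  fixes Z :: "'w \<Rightarrow> 'a::euclidean_space"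
  assumes "prob_space M" "Z \<in> borel_measurable M"
  shows "integrable M (\<lambda>\<omega>. iexp (u \<bullet> Z \<omega>))"
proof -
  interpret prob_space M by fact
  show ?thesis using assms(2) by (intro integrable_const_bound[of _ 1]) auto
qed

lemma char_fun_distr:
  fixes Z :: "'w \<Rightarrow> 'a::euclidean_space"
  assumes "Z \<in> borel_measurable M"
  shows "(CLINT x|distr M borel Z. iexp (u \<bullet> x)) = char_fun M Z u"
  unfolding char_fun_def by (rule integral_distr[OF assms borel_measurable_iexp_inner])

lemma char_fun_cong_AE:
  fixes Z W :: "'w \<Rightarrow> 'a::euclidean_space"
  assumes "Z \<in> borel_measurable M" "W \<in> borel_measurable M" "AE \<omega> in M. Z \<omega> = W \<omega>"
  shows "char_fun M Z u = char_fun M W u"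
  unfolding char_fun_def using assms by (intro integral_cong_AE) auto

lemma distr_eq_if_char_fun_eq:
  fixes Z :: "'w \<Rightarrow> 'a::euclidean_space" and W :: "'v \<Rightarrow> 'a"
  assumes "prob_space M" "prob_space N" "Z \<in> borel_measurable M" "W \<in> borel_measurable N"
    and "\<And>u. char_fun M Z u = char_fun N W u"
  shows "distr M borel Z = distr N borel W"
  using assms by (intro Levy_uniqueness_euclidean prob_space.prob_space_distr)
    (simp_all add: char_fun_distr)

lemma char_fun_zero: "prob_space M \<Longrightarrow> char_fun M Z 0 = 1"
  unfolding char_fun_def by (simp add: prob_space.prob_space)

lemma char_fun_const_zero: "prob_space M \<Longrightarrow> char_fun M (\<lambda>_. 0::'a::euclidean_space) u = 1"
  unfolding char_fun_def by (simp add: prob_space.prob_space)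

lemma iexp_inner_sum: "iexp (u \<bullet> (\<Sum>i\<in>I. z i)) = (\<Prod>i\<in>I. iexp (u \<bullet> z i))"
  by (cases "finite I") (simp_all add: inner_sum_right sum_distrib_left exp_sum)

lemma char_fun_sum_indep:
  fixes Z :: "'i \<Rightarrow> 'w \<Rightarrow> 'a::euclidean_space"
  assumes "prob_space M" "finite I" "prob_space.indep_vars M (\<lambda>_. borel) Z I"
  shows "char_fun M (\<lambda>\<omega>. \<Sum>i\<in>I. Z i \<omega>) u = (\<Prod>i\<in>I. char_fun M (Z i) u)"
proof -
  interpret prob_space M by fact
  have Z: "Z i \<in> borel_measurable M" if "i \<in> I" for i
    using assms(3) that unfolding indep_vars_def by auto
  have "indep_vars (\<lambda>_. borel) (\<lambda>i \<omega>. iexp (u \<bullet> Z i \<omega>)) I"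
    by (rule indep_vars_compose2[OF assms(3)]) simp
  then show ?thesis
    unfolding char_fun_def iexp_inner_sum
    by (rule indep_vars_lebesgue_integral[OF assms(2)]) (rule integrable_iexp_inner[OF assms(1) Z])
qed

lemma char_fun_sum_PiM:
  fixes Z :: "'w \<Rightarrow> 'a::euclidean_space"
  assumes "prob_space M" "Z \<in> borel_measurable M"
  shows "char_fun (PiM {..<n} (\<lambda>_. M)) (\<lambda>\<omega>. \<Sum>i<n. Z (\<omega> i)) u = (char_fun M Z u) ^ n"
proof -
  interpret prob_space M by fact
  interpret product_prob_space "\<lambda>_::nat. M" by unfold_locales
  have "char_fun (PiM {..<n} (\<lambda>_. M)) (\<lambda>\<omega>. \<Sum>i<n. Z (\<omega> i)) u = (\<Prod>i<n. char_fun M Z u)"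
    unfolding char_fun_def iexp_inner_sum
    by (rule product_integral_prod) (auto intro: integrable_iexp_inner[OF assms])
  then show ?thesis by simp
qed

lemma isCont_char_fun_scaleR:
  fixes Z :: "'w \<Rightarrow> 'a::euclidean_space"
  assumes "prob_space M" "Z \<in> borel_measurable M"
  shows "isCont (\<lambda>r. char_fun M Z (r *\<^sub>R u)) r0"
  unfolding continuous_at_sequentially comp_def
proof safe
  interpret prob_space M by fact
  fix r :: "nat \<Rightarrow> real" assume "r \<longlonglongrightarrow> r0"
  then show "(\<lambda>n. char_fun M Z (r n *\<^sub>R u)) \<longlonglongrightarrow> char_fun M Z (r0 *\<^sub>R u)"
    unfolding char_fun_def using assms(2)
    by (intro integral_dominated_convergence[where w="\<lambda>_. 1"]) (auto intro!: tendsto_intros)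
qed

lemma char_fun_eq_one_if_idempotent:
  fixes Z :: "'w \<Rightarrow> 'a::euclidean_space"
  assumes "prob_space M" "Z \<in> borel_measurable M" "\<And>u. char_fun M Z u = (char_fun M Z u)\<^sup>2"
  shows "char_fun M Z u = 1"
proof (rule ccontr)
  assume "char_fun M Z u \<noteq> 1"
  \<comment> \<open>Along the ray through u the values lie in {0, 1}, but they vary continuously from 1 at 0.\<close>
  define h where "h r = char_fun M Z (r *\<^sub>R u)" for r
  have h01: "h r = 0 \<or> h r = 1" for r
    using assms(3)[of "r *\<^sub>R u"] unfolding h_def power2_eq_square
    by (metis mult_cancel_left2 mult_zero_right)
  have "h 0 = 1" unfolding h_def using char_fun_zero[OF assms(1)] by simp
  moreover have "h 1 = 0" using h01[of 1] \<open>char_fun M Z u \<noteq> 1\<close> unfolding h_def by simp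
  moreover have "isCont (\<lambda>r. Re (h r)) r" for r
    unfolding h_def using isCont_char_fun_scaleR[OF assms(1,2)] by (auto intro: continuous_intros)
  ultimately obtain r where "Re (h r) = 1/2"
    using IVT2[of "\<lambda>r. Re (h r)" 1 "1/2" 0] by auto
  then show False using h01[of r] by auto
qed
lemma norm_iexp_diff_le: "norm (iexp a - iexp b) \<le> \<bar>a - b\<bar>"
proof -
  have "iexp a - iexp b = iexp b * (iexp (a - b) - 1)"
    by (simp add: algebra_simps exp_add[symmetric])
  then have "norm (iexp a - iexp b) = norm (iexp (a - b) - 1)"
    by (simp add: norm_mult)
  also have "\<dots> \<le> \<bar>a - b\<bar>"
    using iexp_approx1[of "a - b" 0] by simp
  finally show ?thesis .
qed

lemma norm_char_fun_diff_le:
  fixes Z W :: "'w \<Rightarrow> 'a::euclidean_space"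
  assumes "prob_space M" "Z \<in> borel_measurable M" "W \<in> borel_measurable M" "0 \<le> d"
  shows "norm (char_fun M Z u - char_fun M W u)
           \<le> norm u * d + 2 * measure M {\<omega>\<in>space M. dist (Z \<omega>) (W \<omega>) > d}"
  unfolding char_fun_def
proof (rule norm_integral_diff_le_indicator)
  show "integrable M (\<lambda>\<omega>. iexp (u \<bullet> Z \<omega>))" "integrable M (\<lambda>\<omega>. iexp (u \<bullet> W \<omega>))"
    using assms(1-3) by (simp_all add: integrable_iexp_inner)
  show "{\<omega>\<in>space M. dist (Z \<omega>) (W \<omega>) > d} \<in> sets M" using assms(2,3) by measurable
  fix \<omega> assume "\<omega> \<in> space M"
  show "norm (iexp (u \<bullet> Z \<omega>) - iexp (u \<bullet> W \<omega>))
          \<le> norm u * d + 2 * indicator {\<omega>\<in>space M. dist (Z \<omega>) (W \<omega>) > d} \<omega>"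
  proof (cases "dist (Z \<omega>) (W \<omega>) > d")
    case True
    have "norm (iexp (u \<bullet> Z \<omega>) - iexp (u \<bullet> W \<omega>)) \<le> norm (iexp (u \<bullet> Z \<omega>)) + norm (iexp (u \<bullet> W \<omega>))"
      by (rule norm_triangle_ineq4)
    moreover have "0 \<le> norm u * d" using assms(4) by simp
    ultimately show ?thesis using True \<open>\<omega> \<in> space M\<close> by simp
  next
    case False
    have "\<bar>u \<bullet> Z \<omega> - u \<bullet> W \<omega>\<bar> \<le> norm u * norm (Z \<omega> - W \<omega>)"
      unfolding inner_diff_right[symmetric] by (rule Cauchy_Schwarz_ineq2)
    also have "\<dots> \<le> norm u * d" using False by (intro mult_left_mono) (auto simp: dist_norm)
    finally show ?thesis using norm_iexp_diff_le[of "u \<bullet> Z \<omega>" "u \<bullet> W \<omega>"] False by simp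
  qed
qed (use assms in auto)

lemma char_fun_tendsto_in_probability:
  fixes Z :: "real \<Rightarrow> 'w \<Rightarrow> 'a::euclidean_space"
  assumes "prob_space M" "\<And>s. s \<in> A \<Longrightarrow> Z s \<in> borel_measurable M" "t \<in> A"
    and "\<And>\<epsilon>. \<epsilon> > 0 \<Longrightarrow>
      ((\<lambda>s. measure M {\<omega>\<in>space M. dist (Z s \<omega>) (Z t \<omega>) > \<epsilon>}) \<longlongrightarrow> 0) (at t within A)"
  shows "((\<lambda>s. char_fun M (Z s) u) \<longlongrightarrow> char_fun M (Z t) u) (at t within A)"
proof (rule tendstoI)
  fix e :: real assume "e > 0"
  have pos: "0 < 2 * norm u + 2" by (simp add: add_nonneg_pos)
  define d where "d = e / (2 * norm u + 2)"
  have "d > 0" unfolding d_def using \<open>e > 0\<close> pos by simp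
  have "norm u * d \<le> (norm u + 1) * d" using \<open>d > 0\<close> by simp
  also have "\<dots> = e / 2" unfolding d_def using pos by (simp add: field_simps)
  finally have ud: "norm u * d \<le> e / 2" .
  have "eventually (\<lambda>s. measure M {\<omega>\<in>space M. dist (Z s \<omega>) (Z t \<omega>) > d} < e / 4 \<and> s \<in> A)
      (at t within A)"
    using order_tendstoD(2)[OF assms(4)[OF \<open>d > 0\<close>], of "e / 4"] \<open>e > 0\<close>
    by (auto simp: eventually_at_filter elim: eventually_mono)
  then show "eventually (\<lambda>s. dist (char_fun M (Z s) u) (char_fun M (Z t) u) < e) (at t within A)"
  proof (rule eventually_mono, safe)
    fix s assume "s \<in> A" "measure M {\<omega>\<in>space M. dist (Z s \<omega>) (Z t \<omega>) > d} < e / 4"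
    then show "dist (char_fun M (Z s) u) (char_fun M (Z t) u) < e"
      using norm_char_fun_diff_le[OF assms(1,2) assms(2)[OF assms(3)], of s d u] \<open>d > 0\<close> ud
      by (simp add: dist_norm)
  qed
qed

section \<open>Power time changes and the IDT property\<close>

definition time_change_powr :: "real \<Rightarrow> (real \<Rightarrow> 'w \<Rightarrow> 'a) \<Rightarrow> real \<Rightarrow> 'w \<Rightarrow> 'a" where
  "time_change_powr \<beta> X t = X (t powr \<beta>)"

lemma is_process_time_change_powr: "is_process M X \<Longrightarrow> is_process M (time_change_powr \<beta> X)"
  unfolding is_process_def time_change_powr_def by auto

lemma eq_law_time_change_powr_inverse:
  fixes X :: "real \<Rightarrow> 'w \<Rightarrow> 'a::euclidean_space"
  assumes "\<alpha> > 0"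
  shows "eq_law M X M (\<lambda>t. time_change_powr (1 / \<alpha>) X (t powr \<alpha>))"
  unfolding eq_law_def fdd_def
proof (intro allI impI arg_cong[where f="distr M _"] ext)
  fix ts :: "real list" and \<omega> i assume "\<forall>t\<in>set ts. 0 \<le> t"
  then have "ts ! i \<ge> 0" if "i < length ts" using that nth_mem by blast
  then show "(\<lambda>i\<in>{..<length ts}. X (ts ! i) \<omega>) i
      = (\<lambda>i\<in>{..<length ts}. time_change_powr (1 / \<alpha>) X ((ts ! i) powr \<alpha>) \<omega>) i"
    using assms by (simp add: time_change_powr_def powr_powr)
qed

lemma indep_increments_time_change_powr:
  fixes X :: "real \<Rightarrow> 'w \<Rightarrow> 'a::euclidean_space"
  assumes "prob_space M" "\<beta> > 0" "indep_increments M X"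
  shows "indep_increments M (time_change_powr \<beta> X)"
  unfolding indep_increments_def
proof (intro allI impI)
  fix ts :: "real list" assume ts: "sorted_wrt (<) ts" "\<forall>t\<in>set ts. 0 \<le> t"
  define ts' where "ts' = map (\<lambda>t. t powr \<beta>) ts"
  have "sorted_wrt (<) ts'"
    unfolding ts'_def sorted_wrt_map
    by (rule sorted_wrt_mono_rel[OF _ ts(1)]) (use ts(2) assms(2) in \<open>auto intro: powr_less_mono2\<close>)
  moreover have "\<forall>t\<in>set ts'. 0 \<le> t" unfolding ts'_def by auto
  ultimately have indep: "prob_space.indep_vars M (\<lambda>_. borel)
      (\<lambda>i \<omega>. X (ts' ! Suc i) \<omega> - X (ts' ! i) \<omega>) {..<length ts' - 1}"
    using assms(3) unfolding indep_increments_def by blast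
  have len: "length ts' = length ts" unfolding ts'_def by simp
  have incr_eq: "(\<lambda>\<omega>. X (ts' ! Suc i) \<omega> - X (ts' ! i) \<omega>) =
      (\<lambda>\<omega>. time_change_powr \<beta> X (ts ! Suc i) \<omega> - time_change_powr \<beta> X (ts ! i) \<omega>)"
    if "i \<in> {..<length ts - 1}" for i
  proof -
    from that have "i < length ts" "Suc i < length ts" by auto
    then show ?thesis by (simp add: ts'_def time_change_powr_def)
  qed
  have cong: "prob_space.indep_vars M (\<lambda>_. borel)
      (\<lambda>i \<omega>. X (ts' ! Suc i) \<omega> - X (ts' ! i) \<omega>) {..<length ts - 1} \<longleftrightarrow>
    prob_space.indep_vars M (\<lambda>_. borel)
      (\<lambda>i \<omega>. time_change_powr \<beta> X (ts ! Suc i) \<omega> - time_change_powr \<beta> X (ts ! i) \<omega>) {..<length ts - 1}"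
    by (rule prob_space.indep_vars_cong[OF assms(1) refl incr_eq refl])
  from indep have "prob_space.indep_vars M (\<lambda>_. borel)
      (\<lambda>i \<omega>. X (ts' ! Suc i) \<omega> - X (ts' ! i) \<omega>) {..<length ts - 1}"
    by (simp only: len)
  with cong show "prob_space.indep_vars M (\<lambda>_. borel)
      (\<lambda>i \<omega>. time_change_powr \<beta> X (ts ! Suc i) \<omega> - time_change_powr \<beta> X (ts ! i) \<omega>) {..<length ts - 1}"
    by (rule iffD1)
qed

lemma filterlim_powr_at_within_nonneg:
  fixes t b :: real
  assumes "b > 0" "t \<ge> 0"
  shows "filterlim (\<lambda>s. s powr b) (at (t powr b) within {0..}) (at t within {0..})"
  unfolding filterlim_at
proof
  show "eventually (\<lambda>s. s powr b \<in> {0..} \<and> s powr b \<noteq> t powr b) (at t within {0..})"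
  proof -
    have "s powr b \<noteq> t powr b" if "0 \<le> s" "s \<noteq> t" for s
      using that assms powr_less_mono2[of b s t] powr_less_mono2[of b t s] by (cases "s < t") auto
    then show ?thesis by (auto simp: eventually_at_filter)
  qed
  show "((\<lambda>s. s powr b) \<longlongrightarrow> t powr b) (at t within {0..})"
    using assms by (intro tendsto_powr'[OF tendsto_ident_at tendsto_const])
      (auto simp: eventually_at_filter)
qed

lemma stoch_continuous_time_change_powr:
  fixes X :: "real \<Rightarrow> 'w \<Rightarrow> 'a::euclidean_space"
  assumes "\<beta> > 0" "stoch_continuous M X"
  shows "stoch_continuous M (time_change_powr \<beta> X)"
  unfolding stoch_continuous_def
proof (intro allI impI)
  fix t \<epsilon> :: real assume "t \<ge> 0" "\<epsilon> > 0"
  then have "((\<lambda>r. measure M {\<omega>\<in>space M. dist (X r \<omega>) (X (t powr \<beta>) \<omega>) > \<epsilon>}) \<longlongrightarrow> 0)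
      (at (t powr \<beta>) within {0..})"
    using assms(2) unfolding stoch_continuous_def by simp
  from filterlim_compose[OF this filterlim_powr_at_within_nonneg[OF assms(1) \<open>t \<ge> 0\<close>]]
  show "((\<lambda>s. measure M {\<omega>\<in>space M. dist (time_change_powr \<beta> X s \<omega>) (time_change_powr \<beta> X t \<omega>) > \<epsilon>})
      \<longlongrightarrow> 0) (at t within {0..})"
    unfolding time_change_powr_def by simp
qed

lemma char_fun_fdd_singleton:
  fixes W :: "real \<Rightarrow> 'w \<Rightarrow> 'a::euclidean_space"
  assumes "W t \<in> borel_measurable N"
  shows "(CLINT f|fdd N W [t]. iexp (u \<bullet> f 0)) = char_fun N (W t) u"
proof -
  have "fdd N W [t] = distr N (PiM {..<1} (\<lambda>_. borel)) (\<lambda>\<omega>. \<lambda>i\<in>{..<1::nat}. W t \<omega>)"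
    unfolding fdd_def by (simp add: restrict_def cong: if_cong)
  moreover have "(\<lambda>\<omega>. \<lambda>i\<in>{..<1::nat}. W t \<omega>) \<in> measurable N (PiM {..<1} (\<lambda>_. borel))"
    using assms by (rule measurable_restrict)
  ultimately show ?thesis
    unfolding char_fun_def by (simp add: integral_distr)
qed

lemma alpha_IDT_char_fun:
  fixes X :: "real \<Rightarrow> 'w \<Rightarrow> 'a::euclidean_space"
  assumes "alpha_IDT \<alpha> M X" "n \<ge> 1" "t \<ge> 0"
  shows "char_fun M (X (real n powr (1 / \<alpha>) * t)) u = (char_fun M (X t) u) ^ n"
proof -
  have "prob_space M" and X: "\<And>s. s \<ge> 0 \<Longrightarrow> X s \<in> borel_measurable M"
    using assms(1) unfolding alpha_IDT_def is_process_def by auto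
  have "char_fun M (X (real n powr (1 / \<alpha>) * t)) u =
      (CLINT f|fdd M (\<lambda>t. X (real n powr (1 / \<alpha>) * t)) [t]. iexp (u \<bullet> f 0))"
    using char_fun_fdd_singleton[of "\<lambda>t. X (real n powr (1 / \<alpha>) * t)"] X assms(3) by simp
  also have "\<dots> = (CLINT f|fdd (PiM {..<n} (\<lambda>_. M)) (\<lambda>t \<omega>. \<Sum>i<n. X t (\<omega> i)) [t]. iexp (u \<bullet> f 0))"
    using assms unfolding alpha_IDT_def eq_law_def by auto
  also have "\<dots> = char_fun (PiM {..<n} (\<lambda>_. M)) (\<lambda>\<omega>. \<Sum>i<n. X t (\<omega> i)) u"
  proof (intro char_fun_fdd_singleton borel_measurable_sum)
    fix i assume "i \<in> {..<n}"
    then show "(\<lambda>\<omega>. X t (\<omega> i)) \<in> borel_measurable (PiM {..<n} (\<lambda>_. M))"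
      using measurable_compose[OF measurable_component_singleton[of i "{..<n}" "\<lambda>_. M"] X[OF assms(3)]]
      by simp
  qed
  also have "\<dots> = (char_fun M (X t) u) ^ n"
    by (rule char_fun_sum_PiM[OF \<open>prob_space M\<close> X[OF assms(3)]])
  finally show ?thesis .
qed

lemma alpha_IDT_start_zero:
  fixes X :: "real \<Rightarrow> 'w \<Rightarrow> 'a::euclidean_space"
  assumes "alpha_IDT \<alpha> M X"
  shows "AE \<omega> in M. X 0 \<omega> = 0"
proof -
  have "prob_space M" and X0: "X 0 \<in> borel_measurable M"
    using assms unfolding alpha_IDT_def is_process_def by auto
  have "char_fun M (X 0) u = (char_fun M (X 0) u)\<^sup>2" for u
  proof -
    have "char_fun M (X (real 2 powr (1 / \<alpha>) * 0)) u = (char_fun M (X 0) u) ^ 2"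
      by (rule alpha_IDT_char_fun[OF assms]) simp_all
    then show ?thesis unfolding mult_zero_right .
  qed
  then have "char_fun M (X 0) u = char_fun M (\<lambda>_. 0) u" for u
    using char_fun_eq_one_if_idempotent[OF \<open>prob_space M\<close> X0] char_fun_const_zero[OF \<open>prob_space M\<close>]
    by metis
  then have law: "distr M borel (X 0) = distr M borel (\<lambda>_. 0)"
    by (intro distr_eq_if_char_fun_eq[OF \<open>prob_space M\<close> \<open>prob_space M\<close> X0]) auto
  have "emeasure M {\<omega>\<in>space M. X 0 \<omega> \<noteq> 0} = 0"
    using arg_cong[OF law, of "\<lambda>\<mu>. emeasure \<mu> (- {0})"] X0
    by (simp add: emeasure_distr vimage_def Int_def conj_commute)
  then show ?thesis
    using X0 by (subst AE_iff_measurable[of "{\<omega>\<in>space M. X 0 \<omega> \<noteq> 0}"]) auto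
qed

section \<open>The time-changed process is a Levy process\<close>

lemma LIMSEQ_dyadic_floor:
  fixes a :: real
  assumes "a \<ge> 0"
  shows "(\<lambda>k. real (nat \<lfloor>a * 2 ^ k\<rfloor>) / 2 ^ k) \<longlonglongrightarrow> a"
proof (rule tendsto_sandwich[of "\<lambda>k. a - 1 / 2 ^ k" _ _ "\<lambda>_. a"])
  have floor: "a * 2 ^ k - 1 \<le> real (nat \<lfloor>a * 2 ^ k\<rfloor>)" "real (nat \<lfloor>a * 2 ^ k\<rfloor>) \<le> a * 2 ^ k"
    for k :: nat
  proof -
    have "real (nat \<lfloor>a * 2 ^ k\<rfloor>) = of_int \<lfloor>a * 2 ^ k\<rfloor>" using assms by simp
    then show "a * 2 ^ k - 1 \<le> real (nat \<lfloor>a * 2 ^ k\<rfloor>)" "real (nat \<lfloor>a * 2 ^ k\<rfloor>) \<le> a * 2 ^ k"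
      by linarith+
  qed
  show "eventually (\<lambda>k. a - 1 / 2 ^ k \<le> real (nat \<lfloor>a * 2 ^ k\<rfloor>) / 2 ^ k) sequentially"
  proof (intro always_eventually allI)
    fix k :: nat
    have "a - 1 / 2 ^ k = (a * 2 ^ k - 1) / 2 ^ k" by (simp add: diff_divide_distrib)
    also have "\<dots> \<le> real (nat \<lfloor>a * 2 ^ k\<rfloor>) / 2 ^ k" using floor(1) by (intro divide_right_mono) auto
    finally show "a - 1 / 2 ^ k \<le> real (nat \<lfloor>a * 2 ^ k\<rfloor>) / 2 ^ k" .
  qed
  show "eventually (\<lambda>k. real (nat \<lfloor>a * 2 ^ k\<rfloor>) / 2 ^ k \<le> a) sequentially"
  proof (intro always_eventually allI)
    fix k :: nat
    have "real (nat \<lfloor>a * 2 ^ k\<rfloor>) / 2 ^ k \<le> a * 2 ^ k / 2 ^ k" using floor(2) by (intro divide_right_mono) auto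
    then show "real (nat \<lfloor>a * 2 ^ k\<rfloor>) / 2 ^ k \<le> a" by simp
  qed
  show "(\<lambda>k. a - 1 / 2 ^ k) \<longlonglongrightarrow> a"
    using tendsto_diff[OF tendsto_const LIMSEQ_divide_realpow_zero[of 2 1]] by simp
qed simp

locale alpha_IDT_indep_increments =
  fixes \<alpha> :: real and M :: "'w measure" and X :: "real \<Rightarrow> 'w \<Rightarrow> 'a::euclidean_space"
  assumes alpha_pos: "\<alpha> > 0"
    and IDT: "alpha_IDT \<alpha> M X"
    and stoch_cont: "stoch_continuous M X"
    and indep_incr: "indep_increments M X"
begin

abbreviation Y :: "real \<Rightarrow> 'w \<Rightarrow> 'a" where
  "Y \<equiv> time_change_powr (1 / \<alpha>) X"

lemma prob_space_M: "prob_space M"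
  using IDT unfolding alpha_IDT_def is_process_def by simp

lemma is_process_Y: "is_process M Y"
  using IDT unfolding alpha_IDT_def by (simp add: is_process_time_change_powr)

lemma measurable_Y: "s \<ge> 0 \<Longrightarrow> Y s \<in> borel_measurable M"
  using is_process_Y unfolding is_process_def by simp

lemma Y_start_zero: "AE \<omega> in M. Y 0 \<omega> = 0"
  using alpha_IDT_start_zero[OF IDT] by (simp add: time_change_powr_def)

lemma char_fun_Y_diff_start: "t \<ge> 0 \<Longrightarrow> char_fun M (\<lambda>\<omega>. Y t \<omega> - Y 0 \<omega>) u = char_fun M (Y t) u"
  using Y_start_zero measurable_Y[of t] measurable_Y[of 0]
  by (intro char_fun_cong_AE) (auto elim: AE_mp)

lemma char_fun_Y_zero: "char_fun M (Y 0) u = 1"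
proof -
  have "char_fun M (Y 0) u = char_fun M (\<lambda>\<omega>. Y 0 \<omega> - Y 0 \<omega>) u"
    using char_fun_Y_diff_start[of 0 u] by simp
  also have "\<dots> = 1" using char_fun_const_zero[OF prob_space_M] by simp
  finally show ?thesis .
qed

lemma char_fun_Y_mult_nat:
  assumes "t \<ge> 0"
  shows "char_fun M (Y (real k * t)) u = (char_fun M (Y t) u) ^ k"
proof (cases "k = 0")
  case True
  then show ?thesis using char_fun_Y_zero by simp
next
  case False
  have "Y (real k * t) = X (real k powr (1 / \<alpha>) * t powr (1 / \<alpha>))"
    unfolding time_change_powr_def using assms by (simp add: powr_mult)
  then show ?thesis
    using alpha_IDT_char_fun[OF IDT, of k "t powr (1 / \<alpha>)" u] False
    by (simp add: time_change_powr_def)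
qed

lemma char_fun_Y_continuous:
  "t \<ge> 0 \<Longrightarrow> continuous (at t within {0..}) (\<lambda>s. char_fun M (Y s) u)"
  unfolding continuous_within
  using stoch_continuous_time_change_powr[OF _ stoch_cont, of "1 / \<alpha>"] alpha_pos measurable_Y
  by (intro char_fun_tendsto_in_probability[OF prob_space_M]) (auto simp: stoch_continuous_def)

lemma char_fun_Y_LIMSEQ:
  assumes "x \<longlonglongrightarrow> c" "\<And>k. x k \<ge> 0" "c \<ge> 0"
  shows "(\<lambda>k. char_fun M (Y (x k)) u) \<longlonglongrightarrow> char_fun M (Y c) u"
  using char_fun_Y_continuous[OF assms(3), of u] assms(1,2)
  unfolding continuous_within_sequentially comp_def by auto

lemma char_fun_Y_nonzero:
  assumes "t \<ge> 0"
  shows "char_fun M (Y t) u \<noteq> 0"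
proof
  assume zero: "char_fun M (Y t) u = 0"
  \<comment> \<open>Then every root char_fun (Y (t / n)) vanishes too, contradicting continuity at 0.\<close>
  define x where "x n = t / real (Suc n)" for n
  have "x \<longlonglongrightarrow> 0"
    unfolding x_def using LIMSEQ_Suc[OF lim_const_over_n[of t]] by simp
  then have "(\<lambda>n. char_fun M (Y (x n)) u) \<longlonglongrightarrow> 1"
    using char_fun_Y_LIMSEQ[of x 0 u] assms char_fun_Y_zero unfolding x_def by simp
  moreover have "char_fun M (Y (x n)) u = 0" for n
  proof -
    have "(char_fun M (Y (x n)) u) ^ Suc n = char_fun M (Y (real (Suc n) * x n)) u"
      using char_fun_Y_mult_nat[of "x n" "Suc n" u] assms unfolding x_def by simp
    also have "\<dots> = 0" using zero unfolding x_def by simp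
    finally show ?thesis by auto
  qed
  ultimately have "(\<lambda>n. 0::complex) \<longlonglongrightarrow> 1" by simp
  from LIMSEQ_unique[OF this tendsto_const] show False by simp
qed

lemma char_fun_Y_add:
  assumes "a \<ge> 0" "b \<ge> 0"
  shows "char_fun M (Y (a + b)) u = char_fun M (Y a) u * char_fun M (Y b) u"
proof -
  define p where "p k = nat \<lfloor>a * 2 ^ k\<rfloor>" for k :: nat
  define q where "q k = nat \<lfloor>b * 2 ^ k\<rfloor>" for k :: nat
  define e :: "nat \<Rightarrow> real" where "e k = 1 / 2 ^ k" for k
  have e: "e k \<ge> 0" for k unfolding e_def by simp
  have pa: "(\<lambda>k. real (p k) * e k) \<longlonglongrightarrow> a" and qb: "(\<lambda>k. real (q k) * e k) \<longlonglongrightarrow> b"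
    using LIMSEQ_dyadic_floor[OF assms(1)] LIMSEQ_dyadic_floor[OF assms(2)]
    unfolding p_def q_def e_def by simp_all
  have "(\<lambda>k. real (p k + q k) * e k) \<longlonglongrightarrow> a + b"
    using tendsto_add[OF pa qb] by (simp add: distrib_right)
  then have "(\<lambda>k. char_fun M (Y (real (p k + q k) * e k)) u) \<longlonglongrightarrow> char_fun M (Y (a + b)) u"
    using assms e by (intro char_fun_Y_LIMSEQ) auto
  moreover have "char_fun M (Y (real (p k + q k) * e k)) u
      = char_fun M (Y (real (p k) * e k)) u * char_fun M (Y (real (q k) * e k)) u" for k
    by (simp only: char_fun_Y_mult_nat[OF e] power_add)
  moreover have "(\<lambda>k. char_fun M (Y (real (p k) * e k)) u * char_fun M (Y (real (q k) * e k)) u)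
      \<longlonglongrightarrow> char_fun M (Y a) u * char_fun M (Y b) u"
    using assms e by (intro tendsto_mult char_fun_Y_LIMSEQ pa qb) auto
  ultimately show ?thesis using LIMSEQ_unique by auto
qed

lemma char_fun_Y_increment:
  assumes "s \<ge> 0" "t \<ge> 0"
  shows "char_fun M (\<lambda>\<omega>. Y (t + s) \<omega> - Y s \<omega>) u = char_fun M (Y t) u"
proof -
  consider "t = 0" | "s = 0" | "0 < s" "0 < t" using assms by linarith
  then show ?thesis
  proof cases
    case 1
    then show ?thesis using char_fun_const_zero[OF prob_space_M] char_fun_Y_zero by simp
  next
    case 2
    then show ?thesis using char_fun_Y_diff_start[OF assms(2)] by simp
  next
    case 3
    define ts where "ts = [0, s, t + s]"
    define D where "D i \<omega> = Y (ts ! Suc i) \<omega> - Y (ts ! i) \<omega>" for i \<omega>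
    have "indep_increments M Y"
      using alpha_pos by (intro indep_increments_time_change_powr[OF prob_space_M _ indep_incr]) simp
    moreover have "sorted_wrt (<) ts" "\<forall>r\<in>set ts. 0 \<le> r" unfolding ts_def using 3 by auto
    ultimately have "prob_space.indep_vars M (\<lambda>_. borel) D {..<length ts - 1}"
      unfolding indep_increments_def D_def by blast
    then have "char_fun M (\<lambda>\<omega>. \<Sum>i<2. D i \<omega>) u = (\<Prod>i<2. char_fun M (D i) u)"
      by (intro char_fun_sum_indep[OF prob_space_M]) (simp_all add: ts_def numeral_2_eq_2)
    then have "char_fun M (\<lambda>\<omega>. Y (t + s) \<omega> - Y 0 \<omega>) u
        = char_fun M (\<lambda>\<omega>. Y s \<omega> - Y 0 \<omega>) u * char_fun M (\<lambda>\<omega>. Y (t + s) \<omega> - Y s \<omega>) u"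
    proof -
      have "D 0 = (\<lambda>\<omega>. Y s \<omega> - Y 0 \<omega>)" "D 1 = (\<lambda>\<omega>. Y (t + s) \<omega> - Y s \<omega>)"
        by (simp_all add: D_def ts_def fun_eq_iff)
      moreover have "(\<lambda>\<omega>. \<Sum>i<2. D i \<omega>) = (\<lambda>\<omega>. Y (t + s) \<omega> - Y 0 \<omega>)"
        by (simp add: D_def ts_def numeral_2_eq_2)
      ultimately show ?thesis
        using \<open>char_fun M (\<lambda>\<omega>. \<Sum>i<2. D i \<omega>) u = _\<close> by (simp add: numeral_2_eq_2 mult.commute)
    qed
    then have "char_fun M (Y s) u * char_fun M (Y t) u
        = char_fun M (Y s) u * char_fun M (\<lambda>\<omega>. Y (t + s) \<omega> - Y s \<omega>) u"
      using char_fun_Y_diff_start[of "t + s" u] char_fun_Y_diff_start[of s u] char_fun_Y_add[of t s u] 3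
      by (simp add: mult.commute)
    then show ?thesis using char_fun_Y_nonzero[OF assms(1)] by simp
  qed
qed

lemma stationary_increments_Y: "stationary_increments M Y"
  unfolding stationary_increments_def
  using measurable_Y char_fun_Y_increment
  by (auto intro!: distr_eq_if_char_fun_eq[OF prob_space_M prob_space_M])

lemma levy_process_Y: "levy_process M Y"
  unfolding levy_process_def
  using is_process_Y Y_start_zero stationary_increments_Y alpha_pos
    indep_increments_time_change_powr[OF prob_space_M _ indep_incr]
    stoch_continuous_time_change_powr[OF _ stoch_cont]
  by simp

end

theorem mainTheorem2:
  fixes \<alpha> :: real and M :: "'w measure" and X :: "real \<Rightarrow> 'w \<Rightarrow> 'a::euclidean_space"
  assumes "\<alpha> > 0"
    and "alpha_IDT \<alpha> M X"
    and "stoch_continuous M X"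
    and "indep_increments M X"
  shows "\<exists>(N :: 'w measure) (L :: real \<Rightarrow> 'w \<Rightarrow> 'a).
           levy_process N L \<and> eq_law M X N (\<lambda>t. L (t powr \<alpha>))"
proof -
  interpret alpha_IDT_indep_increments \<alpha> M X
    using assms by unfold_locales
  have "levy_process M (time_change_powr (1 / \<alpha>) X)" by (rule levy_process_Y)
  moreover have "eq_law M X M (\<lambda>t. time_change_powr (1 / \<alpha>) X (t powr \<alpha>))"
    by (rule eq_law_time_change_powr_inverse[OF assms(1)])
  ultimately show ?thesis by blast
qed

end
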